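(* Let $A$ be a generalized ring. Every maximal proper h-ideal of $A$ (a proper h-ideal not strictly contained in any proper h-ideal) is a prime of $A$.
   Context: All sets $X,Y,Z,W$ below are finite. A partial map $f:X\rightharpoonup Y$ is a map $f:D(f)\to Y$ defined on a subset $D(f)\subseteq X$; $f^{-1}(y)\subseteq D(f)$ is its fibre, $Set_\bullet(X,Y)$ is the set of partial maps, composed as partial maps. $\mathbb F_\bullet$ is the category of finite sets with partial bijections as morphisms; $f^t$ is the inverse partial bijection. $[1]=\{1\}$ and $c_X:X\to[1]$ is the total map. A generalized ring $A$ consists of: (1) a functor $X\mapsto A_X$, $f\mapsto f_A$, from $\mathbb F_\bullet$ to pointed sets with $A_\emptyset=\{0\}$; for $f\in Set_\bullet(X,Y)$ put $A_f=\prod_{y\in Y}A_{f^{-1}(y)}$, elements $b=(b^{(y)})_{y}$; so $A_{c_X}=A_X$, and $A_{id_X}$ is identified with $(A_{[1]})^X$ via the unique bijections $[1]\cong\{x\}$. (2) For each $f\in Set_\bullet(X,Y)$ a multiplication $\circ:A_Y\times A_f\to A_X$ and a contraction $(\,,\,):A_X\times A_f\to A_Y$, both giving $0$ when an argument is $0$. For $g\in Set_\bullet(Y,Z)$ these extend fibrewise to $\circ:A_g\times A_f\to A_{g\circ f}$ and $(\,,\,):A_{g\circ f}\times A_f\to A_g$ by $(a\circ b)^{(z)}=a^{(z)}\circ b|_z$, $(c,b)^{(z)}=(c^{(z)},b|_z)$, where $b|_z=(b^{(y)})_{y\in g^{-1}(z)}\in A_{f|_z}$ for the restriction $f|_z:(g\circ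 f)^{-1}(z)\rightharpoonup g^{-1}(z)$. (3) A unit $1\in A_{[1]}$; $1_x\in A_{\{x\}}$ is its transport, and for a partial bijection $f$, $1_f\in A_f$ has components $1_{f^t(y)}$ on the image of $f$ and $0$ otherwise. Axioms, for all partial maps $W\xleftarrow{h}Z\xleftarrow{g}Y\xleftarrow{f}X$: $d\circ(c\circ b)=(d\circ c)\circ b$ ($d\in A_h,c\in A_g,b\in A_f$); $(d,a\circ c)=((d,c),a)$ ($d\in A_{h\circ g\circ f},a\in A_g,c\in A_f$); $(d\circ c,a)=(d,(a,c))$ ($d\in A_{h\circ g},a\in A_{g\circ f},c\in A_f$); $(d\circ a,c)=d\circ(a,c)$ ($d\in A_h,a\in A_{g\circ f},c\in A_f$); right linearity: for $Z\xrightarrow{g}Y\xleftarrow{f}X$, $h\in Set_\bullet(Y,W)$, $P=\{(z,x)\in D(g)\times D(f):g(z)=f(x)\}$ with projections $\tilde f:P\to Z$, $\tilde g:P\to X$, $\tilde c^{(z)}=c^{(g(z))}$ ($\tilde c\in A_{\tilde f}$), $\tilde a^{(x)}=a^{(f(x))}$ ($\tilde a\in A_{\tilde g}$): $(d,c)\circ a=(d\circ\tilde a,\tilde c)$ for $d\in A_{h\circ f},a\in A_g,c\in A_f$; unit: $a\circ 1_{id_X}=1_{id_Y}\circ a=(a,1_{id_X})=a$ for $a\in A_f$, and $a\circ 1_{f^t}=(a,1_f)=f_A(a)$ for $a\in A_X$ and partial bijections $f:X\to Y$. $A_{[1]}$ is a commutative monoid under $\circ$; we have $(\,,\,):A_X\times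 A_X\to A_{[1]}$ and $\circ:A_X\times (A_{[1]})^X\to A_X$. An h-ideal of $A$ is a subset $\mathfrak a\subseteq A_{[1]}$ with $(b\circ c,d)\in\mathfrak a$ for all finite $X$, $b,d\in A_X$, $c\in\mathfrak a^X$. It is proper if $1\notin\mathfrak a$. A prime is a proper h-ideal $\mathfrak p$ such that for $a,b\in A_{[1]}$, $a\circ b\in\mathfrak p$ implies $a\in\mathfrak p$ or $b\in\mathfrak p$. *)

theory Defs
  imports Main "HOL-Library.Nat_Bijection"
begin

text \<open>Finite sets are modelled as finite subsets of nat; partial maps X \<rightharpoonup> Y as
  maps nat \<Rightarrow> nat option with domain in X and range in Y.  The one-point set [1] is {1}.
  All the sets A_X are modelled inside one carrier type 'a.\<close>

type_synonym pmap = "nat \<Rightarrow> nat option"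

definition is_pmap :: "nat set \<Rightarrow> nat set \<Rightarrow> pmap \<Rightarrow> bool" where
  "is_pmap X Y f \<longleftrightarrow> dom f \<subseteq> X \<and> ran f \<subseteq> Y"

definition is_pbij :: "nat set \<Rightarrow> nat set \<Rightarrow> pmap \<Rightarrow> bool" where
  "is_pbij X Y f \<longleftrightarrow> is_pmap X Y f \<and> inj_on f (dom f)"

definition fib :: "pmap \<Rightarrow> nat \<Rightarrow> nat set" where
  "fib f y = {x. f x = Some y}"

definition pinv :: "pmap \<Rightarrow> pmap" where
  "pinv f = (\<lambda>y. if y \<in> ran f then Some (THE x. f x = Some y) else None)"

definition idm :: "nat set \<Rightarrow> pmap" where
  "idm X = (\<lambda>x. if x \<in> X then Some x else None)"

definition cmap :: "nat set \<Rightarrow> pmap" where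
  "cmap X = (\<lambda>x. if x \<in> X then Some 1 else None)"

definition sgl :: "nat \<Rightarrow> pmap" where
  "sgl x = (\<lambda>t. if t = 1 then Some x else None)"

record 'a gring =
  gcar :: "nat set \<Rightarrow> 'a set"
  gzero :: "nat set \<Rightarrow> 'a"
  gmap :: "nat set \<Rightarrow> nat set \<Rightarrow> pmap \<Rightarrow> 'a \<Rightarrow> 'a"
  gmul :: "nat set \<Rightarrow> nat set \<Rightarrow> pmap \<Rightarrow> 'a \<Rightarrow> (nat \<Rightarrow> 'a) \<Rightarrow> 'a" (* A_Y \<times> A_f \<rightarrow> A_X *)
  gcon :: "nat set \<Rightarrow> nat set \<Rightarrow> pmap \<Rightarrow> 'a \<Rightarrow> (nat \<Rightarrow> 'a) \<Rightarrow> 'a" (* A_X \<times> A_f \<rightarrow> A_Y *)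
  gone :: 'a

text \<open>A_f for f : X \<rightharpoonup> Y, as extensional families over Y\<close>
definition Af :: "'a gring \<Rightarrow> nat set \<Rightarrow> pmap \<Rightarrow> (nat \<Rightarrow> 'a) set" where
  "Af R Y f = {b. (\<forall>y\<in>Y. b y \<in> gcar R (fib f y)) \<and> (\<forall>y. y \<notin> Y \<longrightarrow> b y = undefined)}"

definition zf :: "'a gring \<Rightarrow> nat set \<Rightarrow> pmap \<Rightarrow> (nat \<Rightarrow> 'a)" where
  "zf R Y f = (\<lambda>y. if y \<in> Y then gzero R (fib f y) else undefined)"

text \<open>identification A_X = A_{c_X}\<close>
definition ofX :: "'a \<Rightarrow> nat \<Rightarrow> 'a" where
  "ofX a = (\<lambda>t. if t = 1 then a else undefined)"

text \<open>identification (A_[1])^X = A_{id_X}\<close>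
definition embed :: "'a gring \<Rightarrow> nat set \<Rightarrow> (nat \<Rightarrow> 'a) \<Rightarrow> (nat \<Rightarrow> 'a)" where
  "embed R X c = (\<lambda>x. if x \<in> X then gmap R {1} {x} (sgl x) (c x) else undefined)"

definition unit_at :: "'a gring \<Rightarrow> nat \<Rightarrow> 'a" where
  "unit_at R x = gmap R {1} {x} (sgl x) (gone R)"

definition unitf :: "'a gring \<Rightarrow> nat set \<Rightarrow> pmap \<Rightarrow> (nat \<Rightarrow> 'a)" where
  "unitf R Y f = (\<lambda>y. if y \<in> Y then (if y \<in> ran f then unit_at R (the (pinv f y)) else gzero R {})
                     else undefined)"

text \<open>fibrewise extensions: for f : X \<rightharpoonup> Y, g : Y \<rightharpoonup> Z,
  mulE : A_g \<times> A_f \<rightarrow> A_{g\<circ>f},  conE : A_{g\<circ>f} \<times> A_f \<rightarrow> A_g\<close>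
definition mulE :: "'a gring \<Rightarrow> nat set \<Rightarrow> pmap \<Rightarrow> pmap \<Rightarrow> (nat \<Rightarrow> 'a) \<Rightarrow> (nat \<Rightarrow> 'a) \<Rightarrow> (nat \<Rightarrow> 'a)" where
  "mulE R Z g f a b = (\<lambda>z. if z \<in> Z then
      gmul R (fib (g \<circ>\<^sub>m f) z) (fib g z) (f |` fib (g \<circ>\<^sub>m f) z) (a z)
             (\<lambda>y. if y \<in> fib g z then b y else undefined)
    else undefined)"

definition conE :: "'a gring \<Rightarrow> nat set \<Rightarrow> pmap \<Rightarrow> pmap \<Rightarrow> (nat \<Rightarrow> 'a) \<Rightarrow> (nat \<Rightarrow> 'a) \<Rightarrow> (nat \<Rightarrow> 'a)" where
  "conE R Z g f c b = (\<lambda>z. if z \<in> Z then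
      gcon R (fib (g \<circ>\<^sub>m f) z) (fib g z) (f |` fib (g \<circ>\<^sub>m f) z) (c z)
             (\<lambda>y. if y \<in> fib g z then b y else undefined)
    else undefined)"

text \<open>pullback P of Z -g-> Y <-f- X, encoded into nat via prod_encode,
  with projections f~ : P \<rightarrow> Z (prj1) and g~ : P \<rightarrow> X (prj2)\<close>
definition pbP :: "pmap \<Rightarrow> pmap \<Rightarrow> nat set" where
  "pbP g f = {prod_encode (z, x) | z x. z \<in> dom g \<and> x \<in> dom f \<and> g z = f x}"

definition prj1 :: "pmap \<Rightarrow> pmap \<Rightarrow> pmap" where
  "prj1 g f = (\<lambda>p. if p \<in> pbP g f then Some (fst (prod_decode p)) else None)"

definition prj2 :: "pmap \<Rightarrow> pmap \<Rightarrow> pmap" where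
  "prj2 g f = (\<lambda>p. if p \<in> pbP g f then Some (snd (prod_decode p)) else None)"

text \<open>c~ \<in> A_{f~}: c~^(z) = c^(g z), transported along f^{-1}(g z) \<cong> f~^{-1}(z)\<close>
definition ctil :: "'a gring \<Rightarrow> nat set \<Rightarrow> pmap \<Rightarrow> pmap \<Rightarrow> (nat \<Rightarrow> 'a) \<Rightarrow> (nat \<Rightarrow> 'a)" where
  "ctil R Z g f c = (\<lambda>z. if z \<in> Z then
      (if z \<in> dom g then
         gmap R (fib f (the (g z))) (fib (prj1 g f) z)
           (\<lambda>x. if x \<in> fib f (the (g z)) then Some (prod_encode (z, x)) else None)
           (c (the (g z)))
       else gzero R {})
    else undefined)"

text \<open>a~ \<in> A_{g~}: a~^(x) = a^(f x), transported along g^{-1}(f x) \<cong> g~^{-1}(x)\<close>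
definition atil :: "'a gring \<Rightarrow> nat set \<Rightarrow> pmap \<Rightarrow> pmap \<Rightarrow> (nat \<Rightarrow> 'a) \<Rightarrow> (nat \<Rightarrow> 'a)" where
  "atil R X g f a = (\<lambda>x. if x \<in> X then
      (if x \<in> dom f then
         gmap R (fib g (the (f x))) (fib (prj2 g f) x)
           (\<lambda>z. if z \<in> fib g (the (f x)) then Some (prod_encode (z, x)) else None)
           (a (the (f x)))
       else gzero R {})
    else undefined)"

definition gr_functor :: "'a gring \<Rightarrow> bool" where
  "gr_functor R \<longleftrightarrow>
     (\<forall>X. finite X \<longrightarrow> gzero R X \<in> gcar R X) \<and>
     gcar R {} = {gzero R {}} \<and>
     (\<forall>X Y f a. finite X \<and> finite Y \<and> is_pbij X Y f \<and> a \<in> gcar R X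
        \<longrightarrow> gmap R X Y f a \<in> gcar R Y) \<and>
     (\<forall>X Y f. finite X \<and> finite Y \<and> is_pbij X Y f \<longrightarrow> gmap R X Y f (gzero R X) = gzero R Y) \<and>
     (\<forall>X a. finite X \<and> a \<in> gcar R X \<longrightarrow> gmap R X X (idm X) a = a) \<and>
     (\<forall>X Y Z f g a. finite X \<and> finite Y \<and> finite Z \<and> is_pbij X Y f \<and> is_pbij Y Z g \<and> a \<in> gcar R X
        \<longrightarrow> gmap R X Z (g \<circ>\<^sub>m f) a = gmap R Y Z g (gmap R X Y f a))"

definition gr_ops :: "'a gring \<Rightarrow> bool" where
  "gr_ops R \<longleftrightarrow>
     (\<forall>X Y f a b. finite X \<and> finite Y \<and> is_pmap X Y f \<and> a \<in> gcar R Y \<and> b \<in> Af R Y f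
        \<longrightarrow> gmul R X Y f a b \<in> gcar R X \<and>
            ((a = gzero R Y \<or> b = zf R Y f) \<longrightarrow> gmul R X Y f a b = gzero R X)) \<and>
     (\<forall>X Y f c b. finite X \<and> finite Y \<and> is_pmap X Y f \<and> c \<in> gcar R X \<and> b \<in> Af R Y f
        \<longrightarrow> gcon R X Y f c b \<in> gcar R Y \<and>
            ((c = gzero R X \<or> b = zf R Y f) \<longrightarrow> gcon R X Y f c b = gzero R Y)) \<and>
     gone R \<in> gcar R {1}"

definition gr_axioms :: "'a gring \<Rightarrow> bool" where
  "gr_axioms R \<longleftrightarrow>
     (\<forall>W Z Y X h g f. finite W \<and> finite Z \<and> finite Y \<and> finite X \<and>
        is_pmap X Y f \<and> is_pmap Y Z g \<and> is_pmap Z W h \<longrightarrow>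
        (\<forall>d\<in>Af R W h. \<forall>c\<in>Af R Z g. \<forall>b\<in>Af R Y f.
           mulE R W h (g \<circ>\<^sub>m f) d (mulE R Z g f c b) = mulE R W (h \<circ>\<^sub>m g) f (mulE R W h g d c) b) \<and>
        (\<forall>d\<in>Af R W ((h \<circ>\<^sub>m g) \<circ>\<^sub>m f). \<forall>a\<in>Af R Z g. \<forall>c\<in>Af R Y f.
           conE R W h (g \<circ>\<^sub>m f) d (mulE R Z g f a c) = conE R W h g (conE R W (h \<circ>\<^sub>m g) f d c) a) \<and>
        (\<forall>d\<in>Af R W (h \<circ>\<^sub>m g). \<forall>a\<in>Af R Z (g \<circ>\<^sub>m f). \<forall>c\<in>Af R Y f.
           conE R W h (g \<circ>\<^sub>m f) (mulE R W (h \<circ>\<^sub>m g) f d c) a = conE R W h g d (conE R Z g f a c)) \<and>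
        (\<forall>d\<in>Af R W h. \<forall>a\<in>Af R Z (g \<circ>\<^sub>m f). \<forall>c\<in>Af R Y f.
           conE R W (h \<circ>\<^sub>m g) f (mulE R W h (g \<circ>\<^sub>m f) d a) c = mulE R W h g d (conE R Z g f a c))) \<and>
     \<comment> \<open>right linearity: Z -g-> Y <-f- X, h : Y \<rightharpoonup> W\<close>
     (\<forall>X Y Z W g f h. finite X \<and> finite Y \<and> finite Z \<and> finite W \<and>
        is_pmap Z Y g \<and> is_pmap X Y f \<and> is_pmap Y W h \<longrightarrow>
        (\<forall>d\<in>Af R W (h \<circ>\<^sub>m f). \<forall>a\<in>Af R Y g. \<forall>c\<in>Af R Y f.
           mulE R W h g (conE R W h f d c) a =
           conE R W (h \<circ>\<^sub>m g) (prj1 g f)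
             (mulE R W (h \<circ>\<^sub>m f) (prj2 g f) d (atil R X g f a)) (ctil R Z g f c))) \<and>
     \<comment> \<open>unit axioms\<close>
     (\<forall>X Y f. finite X \<and> finite Y \<and> is_pmap X Y f \<longrightarrow>
        (\<forall>a\<in>Af R Y f.
           mulE R Y f (idm X) a (unitf R X (idm X)) = a \<and>
           mulE R Y (idm Y) f (unitf R Y (idm Y)) a = a \<and>
           conE R Y f (idm X) a (unitf R X (idm X)) = a)) \<and>
     (\<forall>X Y f. finite X \<and> finite Y \<and> is_pbij X Y f \<longrightarrow>
        (\<forall>a\<in>gcar R X.
           gmul R Y X (pinv f) a (unitf R X (pinv f)) = gmap R X Y f a \<and>
           gcon R X Y f a (unitf R Y f) = gmap R X Y f a))"

definition generalized_ring :: "'a gring \<Rightarrow> bool" where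
  "generalized_ring R \<longleftrightarrow> gr_functor R \<and> gr_ops R \<and> gr_axioms R"

text \<open>h-ideals: (b \<circ> c, d) \<in> \<aa> for b, d \<in> A_X, c \<in> \<aa>^X\<close>
definition h_ideal :: "'a gring \<Rightarrow> 'a set \<Rightarrow> bool" where
  "h_ideal R I \<longleftrightarrow> I \<subseteq> gcar R {1} \<and>
     (\<forall>X b d c. finite X \<and> b \<in> gcar R X \<and> d \<in> gcar R X \<and> (\<forall>x\<in>X. c x \<in> I) \<longrightarrow>
        gcon R X {1} (cmap X) (gmul R X X (idm X) b (embed R X c)) (ofX d) \<in> I)"

definition proper_h_ideal :: "'a gring \<Rightarrow> 'a set \<Rightarrow> bool" where
  "proper_h_ideal R I \<longleftrightarrow> h_ideal R I \<and> gone R \<notin> I"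

definition maximal_h_ideal :: "'a gring \<Rightarrow> 'a set \<Rightarrow> bool" where
  "maximal_h_ideal R I \<longleftrightarrow> proper_h_ideal R I \<and>
     (\<forall>J. proper_h_ideal R J \<and> I \<subseteq> J \<longrightarrow> J = I)"

definition mul1 :: "'a gring \<Rightarrow> 'a \<Rightarrow> 'a \<Rightarrow> 'a" where
  "mul1 R a b = gmul R {1} {1} (idm {1}) a (embed R {1} (\<lambda>_. b))"

definition prime_h_ideal :: "'a gring \<Rightarrow> 'a set \<Rightarrow> bool" where
  "prime_h_ideal R P \<longleftrightarrow> proper_h_ideal R P \<and>
     (\<forall>a\<in>gcar R {1}. \<forall>b\<in>gcar R {1}. mul1 R a b \<in> P \<longrightarrow> a \<in> P \<or> b \<in> P)"

end

theory Submission
  imports Defs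
begin

text \<open>If \<open>a \<circ> b \<in> M\<close> but \<open>b \<notin> M\<close>, the colon \<open>(M : b) = {x. x \<circ> b \<in> M}\<close> contains \<open>M\<close> and \<open>a\<close> but
  not \<open>1\<close>, so by maximality it is \<open>M\<close> once it is an h-ideal, and then \<open>a \<in> M\<close>. The h-ideal
  property is the heart of the matter: by right linearity, a generator \<open>(\<beta> \<circ> c, d)\<close> multiplied by
  \<open>b\<close> is again a generator, now over the pullback of \<open>c\<^sub>X\<close> along \<open>id\<^sub>[\<^sub>1\<^sub>]\<close> (a copy of \<open>X\<close>), and
  associativity turns its coefficients into \<open>c\<^sub>x \<circ> b \<in> M\<close>. Multiplication by scalars, needed for
  \<open>M \<subseteq> (M : b)\<close>, is itself a contraction \<open>x \<circ> y = (x, (1, y))\<close>.\<close>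

declare One_nat_def [simp del]

lemma pinv_eq_Some: "inj_on f (dom f) \<Longrightarrow> f x = Some y \<Longrightarrow> pinv f y = Some x"
proof -
  assume inj: "inj_on f (dom f)" and fx: "f x = Some y"
  have "(THE x. f x = Some y) = x"
    using inj fx by (auto intro!: the_equality simp: inj_on_def domI)
  with fx show ?thesis by (auto simp: pinv_def ran_def)
qed

lemma restrict_map_eq_self: "dom h \<subseteq> A \<Longrightarrow> h |` A = h"
  by (rule ext) (auto simp: restrict_map_def eq_commute[of None])

lemma map_comp_assoc: "(h \<circ>\<^sub>m g) \<circ>\<^sub>m f = h \<circ>\<^sub>m (g \<circ>\<^sub>m f)"
  by (rule ext) (simp add: map_comp_def split: option.splits)

lemma dom_map_comp_eq: "ran f \<subseteq> dom g \<Longrightarrow> dom (g \<circ>\<^sub>m f) = dom f"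
  by (auto simp: map_comp_def dom_def ran_def split: option.splits)

lemma ran_map_comp_subset: "ran (g \<circ>\<^sub>m f) \<subseteq> ran g"
  by (auto simp: map_comp_def ran_def split: option.splits)

lemma is_pbij_idm: "is_pbij X X (idm X)"
  by (auto simp: is_pbij_def is_pmap_def idm_def ran_def dom_def intro: inj_onI)

lemma is_pmap_idm: "is_pmap X X (idm X)"
  using is_pbij_idm by (simp add: is_pbij_def)

lemma dom_idm [simp]: "dom (idm X) = X"
  by (auto simp: idm_def dom_def)

lemma fib_idm: "x \<in> X \<Longrightarrow> fib (idm X) x = {x}"
  by (auto simp: fib_def idm_def)

lemma idm_map_comp_idm [simp]: "idm X \<circ>\<^sub>m idm X = idm X"
  by (rule ext) (simp add: idm_def map_comp_def)

lemma restrict_idm [simp]: "idm X |` X = idm X"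
  by (rule ext) (simp add: idm_def restrict_map_def)

lemma pinv_idm: "pinv (idm X) = idm X"
  by (rule ext) (auto simp: pinv_def idm_def ran_def)

lemma map_comp_idm_left: "ran f \<subseteq> Y \<Longrightarrow> idm Y \<circ>\<^sub>m f = f"
  by (rule ext) (auto simp: idm_def map_comp_def ran_def split: option.splits)

lemma map_comp_idm_right: "dom f \<subseteq> X \<Longrightarrow> f \<circ>\<^sub>m idm X = f"
  by (rule ext) (auto simp: idm_def map_comp_def eq_commute[of None])

lemma is_pmap_cmap: "is_pmap X {1} (cmap X)"
  by (auto simp: is_pmap_def cmap_def ran_def dom_def)

lemma dom_cmap [simp]: "dom (cmap X) = X"
  by (auto simp: cmap_def dom_def)

lemma ran_cmap: "ran (cmap X) \<subseteq> {1}"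
  by (auto simp: cmap_def ran_def)

lemma fib_cmap_one: "fib (cmap X) 1 = X"
  by (auto simp: fib_def cmap_def)

lemma cmap_one: "cmap {1} = idm {1}"
  by (auto simp: cmap_def idm_def)

lemma cmap_map_comp: "ran h \<subseteq> Z \<Longrightarrow> cmap Z \<circ>\<^sub>m h = cmap (dom h)"
  by (rule ext) (auto simp: map_comp_def cmap_def ran_def split: option.splits)

lemma sgl_eq: "sgl w = [1 \<mapsto> w]"
  by (auto simp: sgl_def)

lemma is_pbij_sgl: "is_pbij {1} {w} (sgl w)"
  by (auto simp: is_pbij_def is_pmap_def sgl_eq ran_def)

lemma sgl_one: "sgl 1 = idm {1}"
  by (auto simp: sgl_def idm_def)

lemma pinv_sgl: "pinv (sgl w) = cmap {w}"
  by (rule ext) (auto simp: pinv_def sgl_def cmap_def ran_def)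

lemma is_pmap_upd: "is_pmap {q} {z} [q \<mapsto> z]"
  by (auto simp: is_pmap_def ran_def)

lemma fib_upd: "fib [q \<mapsto> z] z = {q}"
  by (auto simp: fib_def)

lemma ofX_one [simp]: "ofX a 1 = a"
  by (simp add: ofX_def)

lemma ofX_inject: "ofX a = ofX b \<Longrightarrow> a = b"
  by (metis ofX_one)

lemma ofX_restrict_one [simp]: "(\<lambda>y. if y = 1 then ofX a y else undefined) = ofX a"
  by (auto simp: ofX_def)

lemma ofX_in_Af: "a \<in> gcar R (fib f 1) \<Longrightarrow> ofX a \<in> Af R {1} f"
  by (auto simp: Af_def ofX_def)

lemma Af_restrict: "c \<in> Af R Y f \<Longrightarrow> (\<lambda>y. if y \<in> Y then c y else undefined) = c"
  by (auto simp: Af_def)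

lemma mulE_restrict [simp]: "(\<lambda>y. if y \<in> Y then mulE R Y g f c b y else undefined) = mulE R Y g f c b"
  by (auto simp: mulE_def)

lemma mulE_one:
  "mulE R {1} h g a c = ofX (gmul R (fib (h \<circ>\<^sub>m g) 1) (fib h 1) (g |` fib (h \<circ>\<^sub>m g) 1) (a 1)
     (\<lambda>y. if y \<in> fib h 1 then c y else undefined))"
  by (auto simp: mulE_def ofX_def)

lemma conE_one:
  "conE R {1} h g a c = ofX (gcon R (fib (h \<circ>\<^sub>m g) 1) (fib h 1) (g |` fib (h \<circ>\<^sub>m g) 1) (a 1)
     (\<lambda>y. if y \<in> fib h 1 then c y else undefined))"
  by (auto simp: conE_def ofX_def)

lemma mulE_one_idm: "mulE R {1} (idm {1}) (idm {1}) (ofX a) (ofX b) = ofX (gmul R {1} {1} (idm {1}) a (ofX b))"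
  by (simp add: mulE_one fib_idm)

lemma conE_one_idm: "conE R {1} (idm {1}) (idm {1}) (ofX a) (ofX b) = ofX (gcon R {1} {1} (idm {1}) a (ofX b))"
  by (simp add: conE_one fib_idm)

lemma conE_one_cmap:
  "conE R {1} (idm {1}) (cmap X) (ofX a) (ofX b) = ofX (gcon R X {1} (cmap X) a (ofX b))"
  by (simp add: conE_one map_comp_idm_left[OF ran_cmap] fib_cmap_one fib_idm restrict_map_eq_self)

lemma mulE_one_cmap:
  assumes "is_pmap X Y f" "dom f = X" "a \<in> Af R Y f"
  shows "mulE R {1} (cmap Y) f (ofX e) a = ofX (gmul R X Y f e a)"
  using assms by (simp add: mulE_one is_pmap_def cmap_map_comp fib_cmap_one restrict_map_eq_self Af_restrict)

lemma unitf_eq_unit_at: "inj_on f (dom f) \<Longrightarrow> f x = Some y \<Longrightarrow> y \<in> Y \<Longrightarrow> unitf R Y f y = unit_at R x"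
  by (auto simp: unitf_def pinv_eq_Some ran_def)

lemma unitf_idm: "y \<in> Y \<Longrightarrow> unitf R Y (idm Y) y = unit_at R y"
  using is_pbij_idm by (intro unitf_eq_unit_at) (auto simp: is_pbij_def idm_def)

lemma unitf_cmap_singleton: "unitf R {1} (cmap {w}) = ofX (unit_at R w)"
proof (rule ext)
  fix y
  show "unitf R {1} (cmap {w}) y = ofX (unit_at R w) y"
  proof (cases "y = 1")
    case True
    have "inj_on (cmap {w}) (dom (cmap {w}))" by simp
    moreover have "cmap {w} w = Some 1" by (simp add: cmap_def)
    ultimately show ?thesis using True by (simp add: unitf_eq_unit_at)
  next
    case False
    then show ?thesis by (simp add: unitf_def ofX_def)
  qed
qed

context
  fixes R :: "'a gring"
  assumes gr: "generalized_ring R"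
begin

lemma generalized_ringD: "gr_functor R" "gr_ops R" "gr_axioms R"
  using gr by (simp_all add: generalized_ring_def)

lemma gmap_closed:
  assumes "finite X" "finite Y" "is_pbij X Y f" "a \<in> gcar R X"
  shows "gmap R X Y f a \<in> gcar R Y"
  using generalized_ringD(1) assms unfolding gr_functor_def by simp

lemma gmap_idm: "finite X \<Longrightarrow> a \<in> gcar R X \<Longrightarrow> gmap R X X (idm X) a = a"
  using generalized_ringD(1) unfolding gr_functor_def by simp

lemma gone_closed: "gone R \<in> gcar R {1}"
  using generalized_ringD(2) unfolding gr_ops_def by simp

lemma gmul_closed:
  assumes "finite X" "finite Y" "is_pmap X Y f" "a \<in> gcar R Y" "b \<in> Af R Y f"
  shows "gmul R X Y f a b \<in> gcar R X"
  using generalized_ringD(2) assms unfolding gr_ops_def by simp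

lemma gcon_closed:
  assumes "finite X" "finite Y" "is_pmap X Y f" "c \<in> gcar R X" "b \<in> Af R Y f"
  shows "gcon R X Y f c b \<in> gcar R Y"
  using generalized_ringD(2) assms unfolding gr_ops_def by simp

lemma mulE_assoc:
  assumes "finite W" "finite Z" "finite Y" "finite X"
    and "is_pmap X Y f" "is_pmap Y Z g" "is_pmap Z W h"
    and "d \<in> Af R W h" "c \<in> Af R Z g" "b \<in> Af R Y f"
  shows "mulE R W h (g \<circ>\<^sub>m f) d (mulE R Z g f c b) = mulE R W (h \<circ>\<^sub>m g) f (mulE R W h g d c) b"
  using generalized_ringD(3) assms unfolding gr_axioms_def by simp

lemma conE_mulE_left:
  assumes "finite W" "finite Z" "finite Y" "finite X"
    and "is_pmap X Y f" "is_pmap Y Z g" "is_pmap Z W h"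
    and "d \<in> Af R W (h \<circ>\<^sub>m g)" "a \<in> Af R Z (g \<circ>\<^sub>m f)" "c \<in> Af R Y f"
  shows "conE R W h (g \<circ>\<^sub>m f) (mulE R W (h \<circ>\<^sub>m g) f d c) a = conE R W h g d (conE R Z g f a c)"
  using generalized_ringD(3) assms unfolding gr_axioms_def by simp

lemma conE_mulE_right:
  assumes "finite W" "finite Z" "finite Y" "finite X"
    and "is_pmap X Y f" "is_pmap Y Z g" "is_pmap Z W h"
    and "d \<in> Af R W h" "a \<in> Af R Z (g \<circ>\<^sub>m f)" "c \<in> Af R Y f"
  shows "conE R W (h \<circ>\<^sub>m g) f (mulE R W h (g \<circ>\<^sub>m f) d a) c = mulE R W h g d (conE R Z g f a c)"
  using generalized_ringD(3) assms unfolding gr_axioms_def by simp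

lemma mulE_conE_right_linear:
  assumes "finite X" "finite Y" "finite Z" "finite W"
    and "is_pmap Z Y g" "is_pmap X Y f" "is_pmap Y W h"
    and "d \<in> Af R W (h \<circ>\<^sub>m f)" "a \<in> Af R Y g" "c \<in> Af R Y f"
  shows "mulE R W h g (conE R W h f d c) a =
    conE R W (h \<circ>\<^sub>m g) (prj1 g f) (mulE R W (h \<circ>\<^sub>m f) (prj2 g f) d (atil R X g f a)) (ctil R Z g f c)"
  using generalized_ringD(3) assms unfolding gr_axioms_def by simp

lemma mulE_unitf_left:
  assumes "finite X" "finite Y" "is_pmap X Y f" "a \<in> Af R Y f"
  shows "mulE R Y (idm Y) f (unitf R Y (idm Y)) a = a"
  using generalized_ringD(3) assms unfolding gr_axioms_def by simp

lemma gmul_unitf_pinv: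
  assumes "finite X" "finite Y" "is_pbij X Y f" "a \<in> gcar R X"
  shows "gmul R Y X (pinv f) a (unitf R X (pinv f)) = gmap R X Y f a"
  using generalized_ringD(3) assms unfolding gr_axioms_def by simp

lemma gcon_unitf:
  assumes "finite X" "finite Y" "is_pbij X Y f" "a \<in> gcar R X"
  shows "gcon R X Y f a (unitf R Y f) = gmap R X Y f a"
  using generalized_ringD(3) assms unfolding gr_axioms_def by simp

lemma unit_at_closed: "unit_at R w \<in> gcar R {w}"
  unfolding unit_at_def by (rule gmap_closed) (auto simp: is_pbij_sgl gone_closed)

lemma unit_at_one: "unit_at R 1 = gone R"
  by (simp add: unit_at_def sgl_one gmap_idm gone_closed)

lemma unitf_idm_one: "unitf R {1} (idm {1}) = ofX (gone R)"
proof (rule ext)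
  fix y
  show "unitf R {1} (idm {1}) y = ofX (gone R) y"
  proof (cases "y = 1")
    case True
    then show ?thesis using unitf_idm[of 1 "{1}" R] by (simp add: unit_at_one)
  next
    case False
    then show ?thesis by (simp add: unitf_def ofX_def)
  qed
qed

lemma embed_one: "b \<in> gcar R {1} \<Longrightarrow> embed R {1} (\<lambda>_. b) = ofX b"
  by (rule ext) (simp add: embed_def ofX_def sgl_one gmap_idm)

lemma embed_in_Af: "\<forall>x\<in>X. c x \<in> gcar R {1} \<Longrightarrow> embed R X c \<in> Af R X (idm X)"
  by (auto simp: Af_def embed_def fib_idm intro!: gmap_closed is_pbij_sgl)

lemma gmap_sgl_eq_gmul:
  "a \<in> gcar R {1} \<Longrightarrow> gmap R {1} {w} (sgl w) a = gmul R {w} {1} (cmap {w}) a (ofX (unit_at R w))"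
  using gmul_unitf_pinv[of "{1}" "{w}" "sgl w" a] by (simp add: is_pbij_sgl pinv_sgl unitf_cmap_singleton)

text \<open>Associativity for total maps, read off the axiom over the target \<open>[1]\<close> of \<open>c\<^sub>Z\<close>.\<close>

lemma gmul_assoc:
  assumes fin: "finite X" "finite Y" "finite Z"
    and pm: "is_pmap X Y f" "is_pmap Y Z g" and dm: "dom f = X" "dom g = Y"
    and mem: "d \<in> gcar R Z" "c \<in> Af R Z g" "b \<in> Af R Y f"
  shows "gmul R X Z (g \<circ>\<^sub>m f) d (mulE R Z g f c b) = gmul R X Y f (gmul R Y Z g d c) b"
proof -
  have rf: "ran f \<subseteq> Y" "ran g \<subseteq> Z" using pm by (auto simp: is_pmap_def)
  have dA: "ofX d \<in> Af R {1} (cmap Z)" by (rule ofX_in_Af) (simp add: fib_cmap_one mem)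
  have "mulE R {1} (cmap Z) (g \<circ>\<^sub>m f) (ofX d) (mulE R Z g f c b) =
     mulE R {1} (cmap Z \<circ>\<^sub>m g) f (mulE R {1} (cmap Z) g (ofX d) c) b"
    by (rule mulE_assoc[OF _ fin(3) fin(2) fin(1) pm is_pmap_cmap dA mem(2) mem(3)]) simp
  moreover have "cmap Z \<circ>\<^sub>m g = cmap Y" "cmap Z \<circ>\<^sub>m (g \<circ>\<^sub>m f) = cmap X"
    using rf dm ran_map_comp_subset[of g f] by (simp_all add: cmap_map_comp dom_map_comp_eq)
  moreover have "cmap Y \<circ>\<^sub>m f = cmap X"
    using rf dm by (simp add: cmap_map_comp)
  moreover have "(g \<circ>\<^sub>m f) |` X = g \<circ>\<^sub>m f" "g |` Y = g" "f |` X = f"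
    using rf dm by (simp_all add: restrict_map_eq_self dom_map_comp_eq)
  ultimately have "ofX (gmul R X Z (g \<circ>\<^sub>m f) d (mulE R Z g f c b)) = ofX (gmul R X Y f (gmul R Y Z g d c) b)"
    by (simp add: mulE_one fib_cmap_one Af_restrict[OF mem(2)] Af_restrict[OF mem(3)] map_comp_assoc)
  then show ?thesis by (rule ofX_inject)
qed

lemma gmul_unit_at_fibre:
  assumes "finite X" "finite Y" "is_pmap X Y f" "a \<in> Af R Y f" "y \<in> Y"
  shows "gmul R (fib f y) {y} (f |` fib f y) (unit_at R y) (\<lambda>y'. if y' = y then a y' else undefined) = a y"
proof -
  have "mulE R Y (idm Y) f (unitf R Y (idm Y)) a y = a y"
    using mulE_unitf_left assms by simp
  moreover have "idm Y \<circ>\<^sub>m f = f"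
    using assms(3) by (simp add: is_pmap_def map_comp_idm_left)
  ultimately show ?thesis
    using assms(5) by (simp add: mulE_def unitf_idm fib_idm)
qed

lemma gmul_unit_at:
  assumes "w \<in> gcar R {q}"
  shows "gmul R {q} {q} (idm {q}) (unit_at R q) (\<lambda>y. if y = q then w else undefined) = w"
proof -
  have "(\<lambda>y. if y = q then w else undefined) \<in> Af R {q} (idm {q})"
    using assms by (auto simp: Af_def fib_idm)
  from gmul_unit_at_fibre[OF _ _ is_pmap_idm this] show ?thesis
    by (simp add: fib_idm cong: if_cong)
qed

end

subsection \<open>The monoid \<open>A\<^sub>[\<^sub>1\<^sub>]\<close>\<close>

definition con1 :: "'a gring \<Rightarrow> 'a \<Rightarrow> 'a \<Rightarrow> 'a" where
  "con1 R x w = gcon R {1} {1} (idm {1}) x (ofX w)"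

lemma ofX_in_Af_idm: "a \<in> gcar R {1} \<Longrightarrow> ofX a \<in> Af R {1} (idm {1})"
  by (rule ofX_in_Af) (simp add: fib_idm)

context
  fixes R :: "'a gring"
  assumes gr: "generalized_ring R"
begin

lemma gmul_one_eq_mul1: "t \<in> gcar R {1} \<Longrightarrow> gmul R {1} {1} (idm {1}) c (ofX t) = mul1 R c t"
  by (simp add: mul1_def embed_one gr)

lemma mul1_closed: "a \<in> gcar R {1} \<Longrightarrow> b \<in> gcar R {1} \<Longrightarrow> mul1 R a b \<in> gcar R {1}"
  by (auto simp flip: gmul_one_eq_mul1 intro: gmul_closed[OF gr] is_pmap_idm ofX_in_Af_idm)

lemma con1_closed: "a \<in> gcar R {1} \<Longrightarrow> b \<in> gcar R {1} \<Longrightarrow> con1 R a b \<in> gcar R {1}"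
  unfolding con1_def by (auto intro: gcon_closed[OF gr] is_pmap_idm ofX_in_Af_idm)

lemma mul1_one_left: "x \<in> gcar R {1} \<Longrightarrow> mul1 R (gone R) x = x"
  using gmul_unit_at[OF gr, of x 1] by (simp add: ofX_def unit_at_one gr flip: gmul_one_eq_mul1)

lemma mul1_one_right: "x \<in> gcar R {1} \<Longrightarrow> mul1 R x (gone R) = x"
  using gmul_unitf_pinv[OF gr _ _ is_pbij_idm, of "{1}" x]
  by (simp add: pinv_idm unitf_idm_one gr gmap_idm gone_closed flip: gmul_one_eq_mul1)

lemma con1_one_right: "x \<in> gcar R {1} \<Longrightarrow> con1 R x (gone R) = x"
  using gcon_unitf[OF gr _ _ is_pbij_idm, of "{1}" x]
  by (simp add: unitf_idm_one gr gmap_idm con1_def)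

lemma con1_eq_mul1_con1:
  assumes x: "x \<in> gcar R {1}" and w: "w \<in> gcar R {1}"
  shows "con1 R x w = mul1 R x (con1 R (gone R) w)"
proof -
  have "conE R {1} (idm {1}) (idm {1}) (mulE R {1} (idm {1}) (idm {1}) (ofX x) (ofX (gone R))) (ofX w)
      = mulE R {1} (idm {1}) (idm {1}) (ofX x) (conE R {1} (idm {1}) (idm {1}) (ofX (gone R)) (ofX w))"
    using conE_mulE_right[OF gr, of "{1}" "{1}" "{1}" "{1}" "idm {1}" "idm {1}" "idm {1}"
        "ofX x" "ofX (gone R)" "ofX w"]
    by (simp add: is_pmap_idm ofX_in_Af_idm x w gone_closed[OF gr])
  then have "ofX (con1 R x w) = ofX (mul1 R x (con1 R (gone R) w))"
    by (simp add: mulE_one_idm conE_one_idm gmul_one_eq_mul1 mul1_one_right x gone_closed[OF gr]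
        con1_closed w flip: con1_def)
  then show ?thesis by (rule ofX_inject)
qed

lemma con1_one_involutive:
  assumes y: "y \<in> gcar R {1}"
  shows "con1 R (gone R) (con1 R (gone R) y) = y"
proof -
  have "conE R {1} (idm {1}) (idm {1}) (mulE R {1} (idm {1}) (idm {1}) (ofX (gone R)) (ofX y)) (ofX (gone R))
      = conE R {1} (idm {1}) (idm {1}) (ofX (gone R)) (conE R {1} (idm {1}) (idm {1}) (ofX (gone R)) (ofX y))"
    using conE_mulE_left[OF gr, of "{1}" "{1}" "{1}" "{1}" "idm {1}" "idm {1}" "idm {1}"
        "ofX (gone R)" "ofX (gone R)" "ofX y"]
    by (simp add: is_pmap_idm ofX_in_Af_idm y gone_closed[OF gr])
  then have "ofX (con1 R (mul1 R (gone R) y) (gone R)) = ofX (con1 R (gone R) (con1 R (gone R) y))"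
    by (simp add: mulE_one_idm conE_one_idm gmul_one_eq_mul1 y gone_closed[OF gr] con1_closed
        flip: con1_def)
  then have "con1 R (mul1 R (gone R) y) (gone R) = con1 R (gone R) (con1 R (gone R) y)"
    by (rule ofX_inject)
  then show ?thesis
    using y by (simp add: mul1_one_left con1_one_right)
qed

lemma mul1_eq_con1:
  "x \<in> gcar R {1} \<Longrightarrow> y \<in> gcar R {1} \<Longrightarrow> mul1 R x y = con1 R x (con1 R (gone R) y)"
  using con1_eq_mul1_con1[of x "con1 R (gone R) y"]
  by (simp add: con1_one_involutive con1_closed gone_closed[OF gr])

text \<open>Transporting along \<open>sgl\<close> is multiplication by a transported unit, so both sides reduce,
  by associativity, to \<open>c\<close> multiplied over \<open>c\<^bsub>{q}\<^esub>\<close> by the transport of \<open>t\<close>.\<close>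

lemma gmul_upd_transport:
  assumes c: "c \<in> gcar R {1}" and t: "t \<in> gcar R {1}"
  shows "gmul R {q} {z} [q \<mapsto> z] (gmap R {1} {z} (sgl z) c)
      (\<lambda>y. if y = z then gmap R {1} {q} (sgl q) t else undefined)
    = gmap R {1} {q} (sgl q) (mul1 R c t)"
proof -
  define tq where "tq = gmap R {1} {q} (sgl q) t"
  define T where "T = (\<lambda>y. if y = z then tq else undefined)"
  have tq: "tq \<in> gcar R {q}"
    unfolding tq_def by (rule gmap_closed[OF gr]) (auto simp: is_pbij_sgl t)
  have TA: "T \<in> Af R {z} [q \<mapsto> z]"
    using tq by (auto simp: Af_def T_def fib_upd)
  have unit_in_Af: "ofX (unit_at R w) \<in> Af R {1} (cmap {w})" for w
    by (rule ofX_in_Af) (simp add: fib_cmap_one unit_at_closed[OF gr])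
  have upd_comp: "cmap {z} \<circ>\<^sub>m [q \<mapsto> z] = cmap {q}"
    by (simp add: cmap_map_comp)
  have restrict_upd: "[q \<mapsto> z] |` {q} = [q \<mapsto> z]"
    by (simp add: restrict_map_eq_self)
  have idm_cmap: "idm {1} \<circ>\<^sub>m cmap {q} = cmap {q}"
    by (rule map_comp_idm_left[OF ran_cmap])
  have "gmul R {q} {1} (cmap {z} \<circ>\<^sub>m [q \<mapsto> z]) c (mulE R {1} (cmap {z}) [q \<mapsto> z] (ofX (unit_at R z)) T)
     = gmul R {q} {z} [q \<mapsto> z] (gmul R {z} {1} (cmap {z}) c (ofX (unit_at R z))) T"
    by (rule gmul_assoc[OF gr _ _ _ is_pmap_upd is_pmap_cmap _ _ c unit_in_Af TA]) auto
  moreover have "mulE R {1} (cmap {z}) [q \<mapsto> z] (ofX (unit_at R z)) T = ofX tq"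
    using gmul_unit_at_fibre[OF gr _ _ is_pmap_upd TA, of z]
    by (simp add: mulE_one upd_comp fib_cmap_one fib_upd restrict_upd T_def cong: if_cong)
  ultimately have lhs: "gmul R {q} {1} (cmap {q}) c (ofX tq)
      = gmul R {q} {z} [q \<mapsto> z] (gmap R {1} {z} (sgl z) c) T"
    by (simp add: upd_comp gmap_sgl_eq_gmul[OF gr c])
  have "gmul R {q} {1} (idm {1} \<circ>\<^sub>m cmap {q}) c (mulE R {1} (idm {1}) (cmap {q}) (ofX t) (ofX (unit_at R q)))
     = gmul R {q} {1} (cmap {q}) (gmul R {1} {1} (idm {1}) c (ofX t)) (ofX (unit_at R q))"
    by (rule gmul_assoc[OF gr _ _ _ is_pmap_cmap is_pmap_idm _ _ c ofX_in_Af_idm[OF t] unit_in_Af]) auto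
  moreover have "mulE R {1} (idm {1}) (cmap {q}) (ofX t) (ofX (unit_at R q)) = ofX tq"
    using gmap_sgl_eq_gmul[OF gr t, of q]
    by (simp add: mulE_one idm_cmap fib_cmap_one fib_idm restrict_map_eq_self tq_def)
  ultimately have rhs: "gmul R {q} {1} (cmap {q}) c (ofX tq) = gmap R {1} {q} (sgl q) (mul1 R c t)"
    by (simp add: idm_cmap gmul_one_eq_mul1[OF t] gmap_sgl_eq_gmul[OF gr mul1_closed[OF c t]])
  from lhs rhs have "gmul R {q} {z} [q \<mapsto> z] (gmap R {1} {z} (sgl z) c) T = gmap R {1} {q} (sgl q) (mul1 R c t)"
    by simp
  then show ?thesis
    unfolding T_def tq_def .
qed

end

subsection \<open>The pullback of \<open>c\<^sub>X\<close> along the identity of \<open>[1]\<close>\<close>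

text \<open>The pullback of \<open>[1] \<rightarrow> [1] \<leftarrow> X\<close> is a copy of \<open>X\<close>, the point over \<open>x\<close> being
  \<open>pb_pt x\<close>; the projections become \<open>cmap (pb_set X)\<close> and \<open>pb_proj X\<close>, whose inverse is
  \<open>pb_iso X\<close>.\<close>

definition pb_pt :: "nat \<Rightarrow> nat" where
  "pb_pt x = prod_encode (1, x)"

definition pb_set :: "nat set \<Rightarrow> nat set" where
  "pb_set X = pb_pt ` X"

definition pb_proj :: "nat set \<Rightarrow> pmap" where
  "pb_proj X = (\<lambda>p. if p \<in> pb_set X then Some (snd (prod_decode p)) else None)"

definition pb_iso :: "nat set \<Rightarrow> pmap" where
  "pb_iso X = (\<lambda>x. if x \<in> X then Some (pb_pt x) else None)"

definition pb_const :: "'a gring \<Rightarrow> nat set \<Rightarrow> 'a \<Rightarrow> nat \<Rightarrow> 'a" where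
  "pb_const R X t = (\<lambda>x. if x \<in> X then gmap R {1} {pb_pt x} (sgl (pb_pt x)) t else undefined)"

definition pb_scale :: "'a gring \<Rightarrow> (nat \<Rightarrow> 'a) \<Rightarrow> 'a \<Rightarrow> nat \<Rightarrow> 'a" where
  "pb_scale R c t = (\<lambda>p. mul1 R (c (snd (prod_decode p))) t)"

lemma pb_pt_inject [simp]: "pb_pt x = pb_pt y \<longleftrightarrow> x = y"
  by (simp add: pb_pt_def)

lemma prod_decode_pb_pt [simp]: "prod_decode (pb_pt x) = (1, x)"
  by (simp add: pb_pt_def)

lemma finite_pb_set: "finite X \<Longrightarrow> finite (pb_set X)"
  by (simp add: pb_set_def)

lemma pbP_idm_cmap: "pbP (idm {1}) (cmap X) = pb_set X"
  unfolding pbP_def pb_set_def pb_pt_def by (auto simp: idm_def cmap_def dom_def split: if_splits)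

lemma prj1_idm_cmap: "prj1 (idm {1}) (cmap X) = cmap (pb_set X)"
  unfolding prj1_def pbP_idm_cmap by (rule ext) (auto simp: cmap_def pb_set_def)

lemma prj2_idm_cmap: "prj2 (idm {1}) (cmap X) = pb_proj X"
  by (simp add: prj2_def pbP_idm_cmap pb_proj_def)

lemma pb_proj_pb_pt: "x \<in> X \<Longrightarrow> pb_proj X (pb_pt x) = Some x"
  by (simp add: pb_proj_def pb_set_def)

lemma fib_pb_proj: "x \<in> X \<Longrightarrow> fib (pb_proj X) x = {pb_pt x}"
  by (auto simp: fib_def pb_proj_def pb_set_def split: if_splits)

lemma dom_pb_proj [simp]: "dom (pb_proj X) = pb_set X"
  by (auto simp: pb_proj_def dom_def)

lemma ran_pb_proj: "ran (pb_proj X) \<subseteq> X"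
  by (auto simp: pb_proj_def ran_def pb_set_def)

lemma is_pmap_pb_proj: "is_pmap (pb_set X) X (pb_proj X)"
  by (simp add: is_pmap_def ran_pb_proj)

lemma inj_on_pb_proj: "inj_on (pb_proj X) (dom (pb_proj X))"
  by (auto simp: inj_on_def pb_proj_def pb_set_def)

lemma restrict_pb_proj: "x \<in> X \<Longrightarrow> pb_proj X |` {pb_pt x} = [pb_pt x \<mapsto> x]"
  by (rule ext) (simp add: restrict_map_def pb_proj_pb_pt)

lemma is_pbij_pb_iso: "is_pbij X (pb_set X) (pb_iso X)"
  by (auto simp: is_pbij_def is_pmap_def pb_iso_def dom_def ran_def pb_set_def inj_on_def split: if_splits)

lemma atil_idm_cmap: "atil R X (idm {1}) (cmap X) (ofX t) = pb_const R X t"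
proof (rule ext)
  fix x
  show "atil R X (idm {1}) (cmap X) (ofX t) x = pb_const R X t x"
  proof (cases "x \<in> X")
    case True
    have "(\<lambda>z. if z \<in> fib (idm {1}) 1 then Some (prod_encode (z, x)) else None) = sgl (pb_pt x)"
      by (rule ext) (simp add: fib_idm sgl_def pb_pt_def)
    moreover have "the (cmap X x) = 1"
      using True by (simp add: cmap_def)
    ultimately show ?thesis
      using True by (simp add: atil_def prj2_idm_cmap fib_pb_proj fib_idm pb_const_def)
  next
    case False
    then show ?thesis by (simp add: atil_def pb_const_def)
  qed
qed

lemma ctil_idm_cmap: "ctil R {1} (idm {1}) (cmap X) (ofX d) = ofX (gmap R X (pb_set X) (pb_iso X) d)"
proof (rule ext)
  fix z
  show "ctil R {1} (idm {1}) (cmap X) (ofX d) z = ofX (gmap R X (pb_set X) (pb_iso X) d) z"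
  proof (cases "z = 1")
    case True
    have "(\<lambda>x. if x \<in> fib (cmap X) 1 then Some (prod_encode (1, x)) else None) = pb_iso X"
      by (rule ext) (simp add: pb_iso_def pb_pt_def fib_cmap_one)
    moreover have "the (idm {1} 1) = (1::nat)"
      by (simp add: idm_def)
    ultimately show ?thesis
      using True by (simp add: ctil_def prj1_idm_cmap fib_cmap_one)
  next
    case False
    then show ?thesis by (simp add: ctil_def ofX_def)
  qed
qed

lemma unitf_pb_proj: "x \<in> X \<Longrightarrow> unitf R X (pb_proj X) x = unit_at R (pb_pt x)"
  by (rule unitf_eq_unit_at[OF inj_on_pb_proj pb_proj_pb_pt])

context
  fixes R :: "'a gring"
  assumes gr: "generalized_ring R"
begin

lemma pb_const_in_Af: "t \<in> gcar R {1} \<Longrightarrow> pb_const R X t \<in> Af R X (pb_proj X)"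
  by (auto simp: Af_def pb_const_def fib_pb_proj intro!: gmap_closed[OF gr] is_pbij_sgl)

lemma unitf_pb_proj_in_Af: "unitf R X (pb_proj X) \<in> Af R X (pb_proj X)"
  by (auto simp: Af_def unitf_pb_proj fib_pb_proj unit_at_closed[OF gr]) (simp add: unitf_def)

lemma pb_scale_closed:
  "\<forall>x\<in>X. c x \<in> gcar R {1} \<Longrightarrow> t \<in> gcar R {1} \<Longrightarrow> \<forall>p\<in>pb_set X. pb_scale R c t p \<in> gcar R {1}"
  by (auto simp: pb_set_def pb_scale_def intro: mul1_closed[OF gr])

lemma mul1_gcon_cmap:
  assumes fX: "finite X" and e: "e \<in> gcar R X" and d: "d \<in> gcar R X" and t: "t \<in> gcar R {1}"
  shows "mul1 R (gcon R X {1} (cmap X) e (ofX d)) t =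
    gcon R (pb_set X) {1} (cmap (pb_set X)) (gmul R (pb_set X) X (pb_proj X) e (pb_const R X t))
      (ofX (gmap R X (pb_set X) (pb_iso X) d))"
proof -
  have idm_cmap: "idm {1} \<circ>\<^sub>m cmap X = cmap X"
    by (rule map_comp_idm_left[OF ran_cmap])
  have "mulE R {1} (idm {1}) (idm {1}) (conE R {1} (idm {1}) (cmap X) (ofX e) (ofX d)) (ofX t) =
      conE R {1} (idm {1} \<circ>\<^sub>m idm {1}) (prj1 (idm {1}) (cmap X))
        (mulE R {1} (idm {1} \<circ>\<^sub>m cmap X) (prj2 (idm {1}) (cmap X)) (ofX e)
          (atil R X (idm {1}) (cmap X) (ofX t)))
        (ctil R {1} (idm {1}) (cmap X) (ofX d))"
    by (rule mulE_conE_right_linear[OF gr fX _ _ _ is_pmap_idm is_pmap_cmap is_pmap_idm])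
      (simp_all add: idm_cmap ofX_in_Af fib_cmap_one e d ofX_in_Af_idm t)
  moreover have "mulE R {1} (cmap X) (pb_proj X) (ofX e) (pb_const R X t)
      = ofX (gmul R (pb_set X) X (pb_proj X) e (pb_const R X t))"
    by (rule mulE_one_cmap[OF is_pmap_pb_proj dom_pb_proj pb_const_in_Af[OF t]])
  ultimately have "ofX (mul1 R (gcon R X {1} (cmap X) e (ofX d)) t) =
    ofX (gcon R (pb_set X) {1} (cmap (pb_set X)) (gmul R (pb_set X) X (pb_proj X) e (pb_const R X t))
      (ofX (gmap R X (pb_set X) (pb_iso X) d)))"
    by (simp add: conE_one_cmap mulE_one_idm gmul_one_eq_mul1[OF gr t] idm_cmap prj1_idm_cmap
        prj2_idm_cmap atil_idm_cmap ctil_idm_cmap)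
  then show ?thesis
    by (rule ofX_inject)
qed

lemma mulE_pb_scale:
  assumes c: "\<forall>x\<in>X. c x \<in> gcar R {1}" and t: "t \<in> gcar R {1}"
  shows "mulE R X (pb_proj X) (idm (pb_set X)) (unitf R X (pb_proj X)) (embed R (pb_set X) (pb_scale R c t)) =
    mulE R X (idm X) (pb_proj X) (embed R X c) (pb_const R X t)"
proof (rule ext)
  fix x
  show "mulE R X (pb_proj X) (idm (pb_set X)) (unitf R X (pb_proj X)) (embed R (pb_set X) (pb_scale R c t)) x =
    mulE R X (idm X) (pb_proj X) (embed R X c) (pb_const R X t) x"
  proof (cases "x \<in> X")
    case False
    then show ?thesis by (simp add: mulE_def)
  next
    case x: True
    define w where "w = gmap R {1} {pb_pt x} (sgl (pb_pt x)) (mul1 R (c x) t)"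
    have cx: "c x \<in> gcar R {1}"
      using c x by blast
    have w: "w \<in> gcar R {pb_pt x}"
      unfolding w_def by (rule gmap_closed[OF gr]) (auto simp: is_pbij_sgl mul1_closed[OF gr cx t])
    have pt: "pb_pt x \<in> pb_set X"
      using x by (simp add: pb_set_def)
    have "idm (pb_set X) |` {pb_pt x} = idm {pb_pt x}"
      by (rule ext) (auto simp: restrict_map_def idm_def pt)
    moreover have "(\<lambda>y. if y \<in> {pb_pt x} then embed R (pb_set X) (pb_scale R c t) y else undefined)
        = (\<lambda>y. if y = pb_pt x then w else undefined)"
      by (rule ext) (simp add: embed_def pt pb_scale_def w_def)
    ultimately have "mulE R X (pb_proj X) (idm (pb_set X)) (unitf R X (pb_proj X))
        (embed R (pb_set X) (pb_scale R c t)) x = w"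
      using x gmul_unit_at[OF gr w]
      by (simp add: mulE_def map_comp_idm_right fib_pb_proj unitf_pb_proj)
    moreover have "(\<lambda>y. if y = x then pb_const R X t y else undefined)
        = (\<lambda>y. if y = x then gmap R {1} {pb_pt x} (sgl (pb_pt x)) t else undefined)"
      by (rule ext) (simp add: pb_const_def x)
    then have "mulE R X (idm X) (pb_proj X) (embed R X c) (pb_const R X t) x = w"
      using x gmul_upd_transport[OF gr cx t, of "pb_pt x" x]
      by (simp add: mulE_def map_comp_idm_left[OF ran_pb_proj] fib_pb_proj fib_idm restrict_pb_proj
          embed_def w_def)
    ultimately show ?thesis
      by simp
  qed
qed

end

subsection \<open>h-ideals\<close>

definition h_comb :: "'a gring \<Rightarrow> nat set \<Rightarrow> 'a \<Rightarrow> (nat \<Rightarrow> 'a) \<Rightarrow> 'a \<Rightarrow> 'a" where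
  "h_comb R X b c d = gcon R X {1} (cmap X) (gmul R X X (idm X) b (embed R X c)) (ofX d)"

definition h_colon :: "'a gring \<Rightarrow> 'a set \<Rightarrow> 'a \<Rightarrow> 'a set" where
  "h_colon R I b = {x \<in> gcar R {1}. mul1 R x b \<in> I}"

lemma h_ideal_iff_h_comb:
  "h_ideal R I \<longleftrightarrow> I \<subseteq> gcar R {1} \<and>
     (\<forall>X b d c. finite X \<and> b \<in> gcar R X \<and> d \<in> gcar R X \<and> (\<forall>x\<in>X. c x \<in> I) \<longrightarrow> h_comb R X b c d \<in> I)"
  by (simp add: h_ideal_def h_comb_def)

lemma h_ideal_h_comb_mem:
  "h_ideal R I \<Longrightarrow> finite X \<Longrightarrow> b \<in> gcar R X \<Longrightarrow> d \<in> gcar R X \<Longrightarrow> \<forall>x\<in>X. c x \<in> I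
    \<Longrightarrow> h_comb R X b c d \<in> I"
  by (simp add: h_ideal_iff_h_comb)

lemma h_comb_one: "h_comb R {1} b (\<lambda>_. m) d = con1 R (mul1 R b m) d"
  by (simp add: h_comb_def cmap_one mul1_def con1_def)

context
  fixes R :: "'a gring"
  assumes gr: "generalized_ring R"
begin

lemma h_comb_closed:
  assumes "finite X" "b \<in> gcar R X" "d \<in> gcar R X" "\<forall>x\<in>X. c x \<in> gcar R {1}"
  shows "h_comb R X b c d \<in> gcar R {1}"
  unfolding h_comb_def using assms fib_cmap_one[of X]
  by (auto intro!: gcon_closed[OF gr] gmul_closed[OF gr] is_pmap_idm is_pmap_cmap embed_in_Af[OF gr] ofX_in_Af)

lemma mul1_h_comb:
  assumes fX: "finite X" and b: "b \<in> gcar R X" and d: "d \<in> gcar R X"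
    and c: "\<forall>x\<in>X. c x \<in> gcar R {1}" and t: "t \<in> gcar R {1}"
  shows "mul1 R (h_comb R X b c d) t =
    h_comb R (pb_set X) (gmul R (pb_set X) X (pb_proj X) b (unitf R X (pb_proj X))) (pb_scale R c t)
      (gmap R X (pb_set X) (pb_iso X) d)"
proof -
  have e: "gmul R X X (idm X) b (embed R X c) \<in> gcar R X"
    by (rule gmul_closed[OF gr fX fX is_pmap_idm b embed_in_Af[OF gr c]])
  have "gmul R (pb_set X) X (idm X \<circ>\<^sub>m pb_proj X) b (mulE R X (idm X) (pb_proj X) (embed R X c) (pb_const R X t))
      = gmul R (pb_set X) X (pb_proj X) (gmul R X X (idm X) b (embed R X c)) (pb_const R X t)"
    by (rule gmul_assoc[OF gr finite_pb_set[OF fX] fX fX is_pmap_pb_proj is_pmap_idm dom_pb_proj dom_idm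
          b embed_in_Af[OF gr c] pb_const_in_Af[OF gr t]])
  moreover have "gmul R (pb_set X) X (pb_proj X \<circ>\<^sub>m idm (pb_set X)) b
      (mulE R X (pb_proj X) (idm (pb_set X)) (unitf R X (pb_proj X)) (embed R (pb_set X) (pb_scale R c t)))
    = gmul R (pb_set X) (pb_set X) (idm (pb_set X)) (gmul R (pb_set X) X (pb_proj X) b (unitf R X (pb_proj X)))
        (embed R (pb_set X) (pb_scale R c t))"
    by (rule gmul_assoc[OF gr finite_pb_set[OF fX] finite_pb_set[OF fX] fX is_pmap_idm is_pmap_pb_proj
          dom_idm dom_pb_proj b unitf_pb_proj_in_Af[OF gr] embed_in_Af[OF gr pb_scale_closed[OF gr c t]]])
  ultimately show ?thesis
    unfolding h_comb_def mul1_gcon_cmap[OF gr fX e d t]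
    by (simp add: map_comp_idm_left[OF ran_pb_proj] map_comp_idm_right mulE_pb_scale[OF gr c t])
qed

lemma h_ideal_mul1_closed:
  assumes I: "h_ideal R I" and m: "m \<in> I" and t: "t \<in> gcar R {1}"
  shows "mul1 R m t \<in> I"
proof -
  have m1: "m \<in> gcar R {1}"
    using I m by (auto simp: h_ideal_def)
  have "h_comb R {1} (gone R) (\<lambda>_. m) (con1 R (gone R) t) \<in> I"
    using m t by (intro h_ideal_h_comb_mem[OF I]) (simp_all add: gone_closed[OF gr] con1_closed[OF gr])
  then show ?thesis
    by (simp add: h_comb_one mul1_one_left[OF gr m1] mul1_eq_con1[OF gr m1 t])
qed

lemma h_ideal_h_colon:
  assumes I: "h_ideal R I" and b: "b \<in> gcar R {1}"
  shows "h_ideal R (h_colon R I b)"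
  unfolding h_ideal_iff_h_comb
proof (intro conjI allI impI)
  show "h_colon R I b \<subseteq> gcar R {1}"
    by (auto simp: h_colon_def)
next
  fix X \<beta> d c
  assume "finite X \<and> \<beta> \<in> gcar R X \<and> d \<in> gcar R X \<and> (\<forall>x\<in>X. c x \<in> h_colon R I b)"
  then have fX: "finite X" and \<beta>: "\<beta> \<in> gcar R X" and d: "d \<in> gcar R X"
    and cb: "\<forall>x\<in>X. c x \<in> gcar R {1} \<and> mul1 R (c x) b \<in> I"
    by (auto simp: h_colon_def)
  then have c: "\<forall>x\<in>X. c x \<in> gcar R {1}"
    by blast
  have "h_comb R (pb_set X) (gmul R (pb_set X) X (pb_proj X) \<beta> (unitf R X (pb_proj X))) (pb_scale R c b)
      (gmap R X (pb_set X) (pb_iso X) d) \<in> I"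
  proof (rule h_ideal_h_comb_mem[OF I finite_pb_set[OF fX]])
    show "gmul R (pb_set X) X (pb_proj X) \<beta> (unitf R X (pb_proj X)) \<in> gcar R (pb_set X)"
      by (rule gmul_closed[OF gr finite_pb_set[OF fX] fX is_pmap_pb_proj \<beta> unitf_pb_proj_in_Af[OF gr]])
    show "gmap R X (pb_set X) (pb_iso X) d \<in> gcar R (pb_set X)"
      by (rule gmap_closed[OF gr fX finite_pb_set[OF fX] is_pbij_pb_iso d])
    show "\<forall>p\<in>pb_set X. pb_scale R c b p \<in> I"
      using cb by (auto simp: pb_set_def pb_scale_def)
  qed
  then show "h_comb R X \<beta> c d \<in> h_colon R I b"
    by (simp add: h_colon_def mul1_h_comb[OF fX \<beta> d c b] h_comb_closed[OF fX \<beta> d c])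
qed

lemma h_ideal_subset_h_colon: "h_ideal R I \<Longrightarrow> b \<in> gcar R {1} \<Longrightarrow> I \<subseteq> h_colon R I b"
  by (auto simp: h_colon_def h_ideal_def intro: h_ideal_mul1_closed)

lemma gone_in_h_colon_iff: "b \<in> gcar R {1} \<Longrightarrow> gone R \<in> h_colon R I b \<longleftrightarrow> b \<in> I"
  by (simp add: h_colon_def gone_closed[OF gr] mul1_one_left[OF gr])

end

theorem proposition4p1p3:
  fixes R :: "'a gring" and M :: "'a set"
  assumes "generalized_ring R"
    and "maximal_h_ideal R M"
  shows "prime_h_ideal R M"
proof -
  note gr = assms(1)
  have M: "h_ideal R M" "gone R \<notin> M"
    and maximal: "\<And>J. proper_h_ideal R J \<Longrightarrow> M \<subseteq> J \<Longrightarrow> J = M"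
    using assms(2) by (auto simp: maximal_h_ideal_def proper_h_ideal_def)
  show ?thesis
    unfolding prime_h_ideal_def
  proof (intro conjI ballI impI)
    show "proper_h_ideal R M"
      using M by (simp add: proper_h_ideal_def)
  next
    fix a b
    assume a: "a \<in> gcar R {1}" and b: "b \<in> gcar R {1}" and ab: "mul1 R a b \<in> M"
    show "a \<in> M \<or> b \<in> M"
    proof (rule disjCI)
      assume "b \<notin> M"
      then have "h_colon R M b = M"
        using M b by (intro maximal)
          (simp_all add: proper_h_ideal_def h_ideal_h_colon gone_in_h_colon_iff h_ideal_subset_h_colon gr)
      moreover have "a \<in> h_colon R M b"
        using a ab by (simp add: h_colon_def)
      ultimately show "a \<in> M"
        by simp
    qed
  qed
qed

end
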